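(* The monoid $\mathrm{lps}$ and the monoids $\mathrm{lps}_n$ for $n\geq2$ do not satisfy any non-trivial identity.
   Context: Let $\mathcal{A}=\{1<2<3<\cdots\}$ and $\mathcal{A}_n=\{1<2<\cdots<n\}$. An lPS tableau is a finite (possibly empty) sequence of nonempty bottom-justified columns of boxes filled with positive integers, such that the entries of each column are strictly decreasing from top to bottom and the bottom entries of the columns form a weakly increasing sequence from left to right. Right insertion of a symbol $a$ into an lPS tableau $B$: if $a$ is greater than or equal to every entry of the bottom row, append a new column consisting of $a$ at the right end; otherwise, let $z$ be the leftmost bottom-row entry with $z>a$ and put $a$ in a new box at the bottom of the column of $z$ (the previous entries of that column move up one box). For $w=w_1\cdots w_k$, $\mathfrak{R}_\ell(w)$ is obtained by starting with the empty tableau and right-inserting $w_1,\dots,w_k$ in order. The monoid $\mathrm{lps}$ (resp. $\mathrm{lps}_n$) is the quotient of $\mathcal{A}^*$ (resp. $\mathcal{A}_n^*$) by the congruence $u\equiv v\iff\mathfrak{R}_\ell(u)=\mathfrak{R}_\ell(v)$. An identity is a formal equality $u=v$ of words over a countable alphabet $\Sigma$ of variables; it is non-trivial if $u\neq v$ as words; a monoid $M$ satisfies it if $f(u)=f(v)$ for every monoid morphism $f:\Sigma^*\to M$. *)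

theory Defs
  imports Main
begin

text \<open>An lPS tableau is a list of columns (left to right); each column is a list of
  entries read from the bottom box upwards (so the head is the bottom-row entry).\<close>
type_synonym tableau = "nat list list"

fun rins :: "tableau \<Rightarrow> nat \<Rightarrow> tableau" where
  "rins [] a = [[a]]"
| "rins (c # cs) a = (if a < hd c then (a # c) # cs else c # rins cs a)"

definition Rl :: "nat list \<Rightarrow> tableau" where
  "Rl w = foldl rins [] w"

text \<open>The monoid lps over alphabet A (A = {1..} for lps, A = {1..n} for lps_n):
  quotient of the free monoid A^* by the congruence u ~ v iff Rl u = Rl v.
  Elements are congruence classes.\<close>
definition lps_cls :: "nat set \<Rightarrow> nat list \<Rightarrow> nat list set" where
  "lps_cls A w = {v \<in> lists A. Rl v = Rl w}"

definition lps_carrier :: "nat set \<Rightarrow> nat list set set" where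
  "lps_carrier A = lps_cls A ` lists A"

definition lps_mult :: "nat set \<Rightarrow> nat list set \<Rightarrow> nat list set \<Rightarrow> nat list set" where
  "lps_mult A X Y = \<Union>{lps_cls A (x @ y) | x y. x \<in> X \<and> y \<in> Y}"

definition lps_one :: "nat set \<Rightarrow> nat list set" where
  "lps_one A = lps_cls A []"

text \<open>Monoid morphisms from the free monoid Sigma^* (Sigma = nat, a countable set of
  variables) into the monoid lps over A.\<close>
definition lps_morphism :: "nat set \<Rightarrow> (nat list \<Rightarrow> nat list set) \<Rightarrow> bool" where
  "lps_morphism A f \<longleftrightarrow> (\<forall>w. f w \<in> lps_carrier A) \<and> f [] = lps_one A \<and>
     (\<forall>x y. f (x @ y) = lps_mult A (f x) (f y))"

definition lps_satisfies :: "nat set \<Rightarrow> nat list \<Rightarrow> nat list \<Rightarrow> bool" where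
  "lps_satisfies A u v \<longleftrightarrow> (\<forall>f. lps_morphism A f \<longrightarrow> f u = f v)"

end

theory Submission
  imports Defs
begin

text \<open>Tableaux whose columns all have bottom entry 1 are inert under right insertion of
  positive letters: the new letter is never smaller than such a bottom entry, so it passes
  them by. Hence on the words w_i = (21)^i 1, whose tableaux consist of i columns 12
  followed by a column 1, right insertion is just concatenation of tableaux, and the
  substitution of w_i for the variable i induces a monoid morphism from the free monoid
  into lps. Since the tableau of w_i is recovered from a concatenation of such tableaux
  (the column 1 marks the end of each block), this morphism is injective, so it separates
  any two distinct words.\<close>

definition bottom_row_ones :: "tableau \<Rightarrow> bool" where
  "bottom_row_ones T \<longleftrightarrow> (\<forall>c\<in>set T. hd c = 1)"

lemma rins_append_bottom_row_ones:
  "bottom_row_ones T \<Longrightarrow> 0 < a \<Longrightarrow> rins (T @ S) a = T @ rins S a"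
  by (induction T) (auto simp: bottom_row_ones_def)

lemma foldl_rins_append_bottom_row_ones:
  "bottom_row_ones T \<Longrightarrow> 0 \<notin> set w \<Longrightarrow> foldl rins (T @ S) w = T @ foldl rins S w"
  by (induction w arbitrary: S) (auto simp: rins_append_bottom_row_ones)

lemma Rl_append_bottom_row_ones:
  assumes "bottom_row_ones (Rl p)" and "0 \<notin> set q"
  shows "Rl (p @ q) = Rl p @ Rl q"
  using foldl_rins_append_bottom_row_ones[OF assms, of "[]"] by (simp add: Rl_def)

text \<open>Only compatibility of Rl with concatenation on the two given classes is required,
  not that the equivalence is a congruence.\<close>

lemma lps_mult_cls:
  assumes "p \<in> lists A" and "q \<in> lists A"
    and compat: "\<And>p' q'. p' \<in> lists A \<Longrightarrow> q' \<in> lists A \<Longrightarrow> Rl p' = Rl p \<Longrightarrow> Rl q' = Rl q \<Longrightarrow>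
                   Rl (p' @ q') = Rl (p @ q)"
  shows "lps_mult A (lps_cls A p) (lps_cls A q) = lps_cls A (p @ q)"
proof -
  have "lps_cls A (p' @ q') = lps_cls A (p @ q)"
    if "p' \<in> lps_cls A p" and "q' \<in> lps_cls A q" for p' q'
    using that compat by (simp add: lps_cls_def)
  moreover have "p \<in> lps_cls A p" and "q \<in> lps_cls A q"
    using assms(1,2) by (simp_all add: lps_cls_def)
  ultimately show ?thesis
    unfolding lps_mult_def by blast
qed

lemma lps_morphism_cls_hom:
  assumes pos: "0 \<notin> A"
    and words: "\<And>w. h w \<in> lists A"
    and ones: "\<And>w. bottom_row_ones (Rl (h w))"
    and hom: "\<And>x y. h (x @ y) = h x @ h y"
  shows "lps_morphism A (\<lambda>w. lps_cls A (h w))"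
proof -
  have "h [] = []"
    using hom[of "[]" "[]"] by (metis append_Nil append_self_conv)
  moreover have "lps_mult A (lps_cls A (h x)) (lps_cls A (h y)) = lps_cls A (h (x @ y))" for x y
  proof -
    have "Rl (p' @ q') = Rl (h x @ h y)"
      if "q' \<in> lists A" "Rl p' = Rl (h x)" "Rl q' = Rl (h y)" for p' q'
    proof -
      have "0 \<notin> set q'" "0 \<notin> set (h y)"
        using that(1) words[of y] pos by auto
      then show ?thesis
        using that(2,3) ones[of x] by (simp add: Rl_append_bottom_row_ones)
    qed
    then show ?thesis
      unfolding hom by (rule lps_mult_cls[OF words words])
  qed
  ultimately show ?thesis
    using words by (auto simp: lps_morphism_def lps_carrier_def lps_one_def)
qed

lemma not_lps_satisfies_if_inj_hom:
  fixes h :: "nat list \<Rightarrow> nat list"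
  assumes "0 \<notin> A"
    and words: "\<And>w. h w \<in> lists A"
    and "\<And>w. bottom_row_ones (Rl (h w))"
    and "\<And>x y. h (x @ y) = h x @ h y"
    and inj: "inj (\<lambda>w. Rl (h w))"
    and "u \<noteq> v"
  shows "\<not> lps_satisfies A u v"
proof -
  have "lps_cls A (h u) \<noteq> lps_cls A (h v)"
  proof
    assume "lps_cls A (h u) = lps_cls A (h v)"
    then have "Rl (h u) = Rl (h v)"
      using words[of u] by (auto simp: lps_cls_def)
    then show False
      using inj \<open>u \<noteq> v\<close> by (auto dest: injD)
  qed
  then show ?thesis
    using lps_morphism_cls_hom[OF assms(1-4)] by (auto simp: lps_satisfies_def)
qed

definition code_word :: "nat \<Rightarrow> nat list" where
  "code_word i = concat (replicate i [2, 1]) @ [1]"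

definition code_tableau :: "nat \<Rightarrow> tableau" where
  "code_tableau i = replicate i [1, 2] @ [[1]]"

definition encode :: "nat list \<Rightarrow> nat list" where
  "encode w = concat (map code_word w)"

lemma Rl_concat_replicate_21: "Rl (concat (replicate i [2, 1])) = replicate i [1, 2]"
proof (induction i)
  case 0
  then show ?case by (simp add: Rl_def)
next
  case (Suc i)
  have "concat (replicate (Suc i) [2, 1]) = concat (replicate i [2, 1]) @ [2, 1::nat]"
    by (induction i) simp_all
  then have "Rl (concat (replicate (Suc i) [2, 1])) = Rl (concat (replicate i [2, 1]) @ [2, 1])"
    by simp
  also have "\<dots> = replicate i [1, 2] @ Rl [2, 1]"
    using Rl_append_bottom_row_ones[of "concat (replicate i [2, 1])" "[2, 1]"] Suc.IH
    by (simp add: bottom_row_ones_def)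
  finally show ?case
    by (simp add: Rl_def replicate_append_same)
qed

lemma Rl_code_word: "Rl (code_word i) = code_tableau i"
  using Rl_concat_replicate_21[of i]
  by (simp add: code_word_def code_tableau_def Rl_append_bottom_row_ones bottom_row_ones_def)
     (simp add: Rl_def)

lemma set_encode: "set (encode w) \<subseteq> {1, 2}"
  by (auto simp: encode_def code_word_def)

lemma Rl_encode: "Rl (encode w) = concat (map code_tableau w)"
proof (induction w)
  case Nil
  then show ?case by (simp add: Rl_def encode_def)
next
  case (Cons i w)
  have "0 \<notin> set (encode w)"
    using set_encode[of w] by auto
  then have "Rl (encode (i # w)) = Rl (code_word i) @ Rl (encode w)"
    by (simp add: encode_def Rl_append_bottom_row_ones Rl_code_word code_tableau_def
        bottom_row_ones_def)
  then show ?case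
    by (simp add: Cons.IH Rl_code_word)
qed

lemma code_tableau_append_eq:
  "code_tableau i @ S = code_tableau j @ T \<Longrightarrow> i = j \<and> S = T"
proof (induction i arbitrary: j)
  case 0
  then show ?case by (cases j) (auto simp: code_tableau_def)
next
  case (Suc i)
  then show ?case by (cases j) (auto simp: code_tableau_def)
qed

lemma inj_concat_map_code_tableau: "inj (\<lambda>w. concat (map code_tableau w))"
proof (rule injI)
  show "u = v" if "concat (map code_tableau u) = concat (map code_tableau v)" for u v
    using that
  proof (induction u arbitrary: v)
    case Nil
    then show ?case by (cases v) (auto simp: code_tableau_def)
  next
    case (Cons i u)
    then obtain j v' where "v = j # v'"
      by (cases v) (auto simp: code_tableau_def)
    then show ?case
      using Cons code_tableau_append_eq[of i "concat (map code_tableau u)" j] by auto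
  qed
qed

lemma not_lps_satisfies:
  assumes "{1, 2} \<subseteq> A" and "0 \<notin> A" and "u \<noteq> v"
  shows "\<not> lps_satisfies A u v"
proof (rule not_lps_satisfies_if_inj_hom[where h = encode])
  show "encode w \<in> lists A" for w
    using set_encode[of w] assms(1) by auto
  show "bottom_row_ones (Rl (encode w))" for w
    by (auto simp: Rl_encode code_tableau_def bottom_row_ones_def)
  show "encode (x @ y) = encode x @ encode y" for x y
    by (simp add: encode_def)
  show "inj (\<lambda>w. Rl (encode w))"
    using inj_concat_map_code_tableau by (simp add: Rl_encode)
qed (use assms in auto)

theorem corollary4p4:
  shows "(\<forall>u v :: nat list. u \<noteq> v \<longrightarrow> \<not> lps_satisfies {1..} u v) \<and>
         (\<forall>n::nat. n \<ge> 2 \<longrightarrow> (\<forall>u v :: nat list. u \<noteq> v \<longrightarrow> \<not> lps_satisfies {1..n} u v))"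
proof (intro conjI allI impI)
  show "\<not> lps_satisfies {1..} u v" if "u \<noteq> v" for u v :: "nat list"
    using that by (intro not_lps_satisfies) auto
  show "\<not> lps_satisfies {1..n} u v" if "n \<ge> 2" and "u \<noteq> v" for n and u v :: "nat list"
    using that by (intro not_lps_satisfies) auto
qed

end
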